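(* Let $C$ be a maximal independent set of the Kneser graph $\Gamma$ of flags of type $\{2,3\}$ of $\mathrm{PG}(6,q)$. If there are more than $q^7+2q^6+2q^5+3q^4+2q^3+2q^2+q+1$ saturated solids for $C$, then $C=\Lambda(H,\mathcal{E})$ for some hyperplane $H$ and some maximal independent set $\mathcal{E}$ of the Kneser graph of planes of $H$.
   Context: Dimensions are projective (planes 2, solids 3, hyperplanes 5). A flag of type $\{2,3\}$ is a pair $(E,S)$ of a plane $E$ and a solid $S$ with $E\subseteq S$; in $\Gamma$ distinct flags $(E,S),(E',S')$ are adjacent iff $E\cap S'=\emptyset$ and $E'\cap S=\emptyset$. A solid $S$ is saturated for $C$ if $(E,S)\in C$ for all planes $E$ of $S$. The Kneser graph of planes of $H$ has planes of $H$ as vertices, adjacent iff disjoint; a maximal independent set of it is a maximal set of pairwise intersecting planes of $H$. $\Lambda(H,\mathcal{E})$ is the set of all flags $(E,S)$ with $S\subseteq H$ or $E\in\mathcal{E}$. *)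

theory Defs
  imports "HOL-Analysis.Analysis" "HOL-Library.Numeral_Type"
begin

text \<open>The projective space PG(n-1,q) is modelled by the vector space 'a^'n over a finite
field 'a with q = CARD('a). A projective subspace of projective dimension k is a
linear subspace of vector dimension k+1. Two projective subspaces are disjoint iff
their vector subspaces meet only in 0.\<close>

definition proj_subspace :: "nat \<Rightarrow> ('a::field ^ 'n) set \<Rightarrow> bool" where
  "proj_subspace k U \<longleftrightarrow> vec.subspace U \<and> vec.dim U = k + 1"

abbreviation plane :: "('a::field ^ 'n) set \<Rightarrow> bool" where
  "plane U \<equiv> proj_subspace 2 U"

abbreviation solid :: "('a::field ^ 'n) set \<Rightarrow> bool" where
  "solid U \<equiv> proj_subspace 3 U"

definition proj_disjoint :: "('a::field ^ 'n) set \<Rightarrow> ('a ^ 'n) set \<Rightarrow> bool" where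
  "proj_disjoint U W \<longleftrightarrow> U \<inter> W = {0}"

definition flag23 :: "('a::field ^ 'n) set \<times> ('a ^ 'n) set \<Rightarrow> bool" where
  "flag23 F \<longleftrightarrow> plane (fst F) \<and> solid (snd F) \<and> fst F \<subseteq> snd F"

definition flag_adj :: "('a::field ^ 'n) set \<times> ('a ^ 'n) set \<Rightarrow> ('a ^ 'n) set \<times> ('a ^ 'n) set \<Rightarrow> bool" where
  "flag_adj F G \<longleftrightarrow> F \<noteq> G \<and> proj_disjoint (fst F) (snd G) \<and> proj_disjoint (fst G) (snd F)"

definition flag_independent :: "(('a::field ^ 'n) set \<times> ('a ^ 'n) set) set \<Rightarrow> bool" where
  "flag_independent C \<longleftrightarrow> (\<forall>F\<in>C. flag23 F) \<and> (\<forall>F\<in>C. \<forall>G\<in>C. \<not> flag_adj F G)"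

definition flag_max_independent :: "(('a::field ^ 'n) set \<times> ('a ^ 'n) set) set \<Rightarrow> bool" where
  "flag_max_independent C \<longleftrightarrow> flag_independent C \<and>
     (\<forall>D. flag_independent D \<and> C \<subseteq> D \<longrightarrow> D = C)"

definition saturated :: "(('a::field ^ 'n) set \<times> ('a ^ 'n) set) set \<Rightarrow> ('a ^ 'n) set \<Rightarrow> bool" where
  "saturated C S \<longleftrightarrow> (\<forall>E. plane E \<and> E \<subseteq> S \<longrightarrow> (E, S) \<in> C)"

definition plane_independent_in :: "('a::field ^ 'n) set \<Rightarrow> ('a ^ 'n) set set \<Rightarrow> bool" where
  "plane_independent_in H \<E> \<longleftrightarrow> (\<forall>E\<in>\<E>. plane E \<and> E \<subseteq> H) \<and>
     (\<forall>E\<in>\<E>. \<forall>E'\<in>\<E>. \<not> proj_disjoint E E')"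

definition plane_max_independent_in :: "('a::field ^ 'n) set \<Rightarrow> ('a ^ 'n) set set \<Rightarrow> bool" where
  "plane_max_independent_in H \<E> \<longleftrightarrow> plane_independent_in H \<E> \<and>
     (\<forall>\<F>. plane_independent_in H \<F> \<and> \<E> \<subseteq> \<F> \<longrightarrow> \<F> = \<E>)"

definition Lambda :: "('a::field ^ 'n) set \<Rightarrow> ('a ^ 'n) set set \<Rightarrow> (('a ^ 'n) set \<times> ('a ^ 'n) set) set" where
  "Lambda H \<E> = {F. flag23 F \<and> (snd F \<subseteq> H \<or> fst F \<in> \<E>)}"

end

(*
  Two saturated solids T, T' meet in at least a line: otherwise planes E of T and E' of T'
  avoiding T \<inter> T' would give adjacent flags (E, T), (E', T') of C. So the saturated solids
  pairwise lie in a common hyperplane, and counting them through hyperplanes (according to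
  whether all of them lie in hyperplanes through a common 4-space, an "axis") shows that more
  than q^7 + 2q^6 + ... + 1 of them lie in a single hyperplane H. That number counts the solids
  of H meeting a fixed line; so if a flag (E, S) of C had E outside H, some saturated solid of H
  would avoid the line H \<inter> E, and a plane of it avoiding S would give a flag adjacent to
  (E, S). Hence all planes of C lie in H; the planes of flags whose solid leaves H are the
  traces H \<inter> S and pairwise meet, they extend to a maximal intersecting family \<E>, and
  maximality of C forces C = \<Lambda>(H, \<E>).

  Subspaces are handled through their vector dimension, one more than the projective one.
*)

theory Submission
  imports Defs
begin

section \<open>Counting subspaces over a finite field\<close>

lemma card_field_ge2: "2 \<le> CARD('a::{field,finite})"
proof -
  have "card {0::'a, 1} = 2" by simp
  moreover have "card {0::'a, 1} \<le> CARD('a)" by (rule card_mono) auto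
  ultimately show ?thesis by simp
qed

lemma sum_le_card_mult: "(\<And>x. x \<in> A \<Longrightarrow> f x \<le> (K::nat)) \<Longrightarrow> sum f A \<le> card A * K"
  using sum_bounded_above[of A f K] by simp

lemma card_UN_le_card_mult:
  assumes "finite I" "\<And>i. i \<in> I \<Longrightarrow> card (A i) \<le> K"
  shows "card (\<Union>i\<in>I. A i) \<le> card I * K"
  by (rule order_trans[OF card_UN_le[OF assms(1)] sum_le_card_mult]) (rule assms(2))

lemma card_le_if_subset_Un: "finite (A \<union> B) \<Longrightarrow> S \<subseteq> A \<union> B \<Longrightarrow> card S \<le> card A + card B"
  using card_mono[of "A \<union> B" S] card_Un_le[of A B] by linarith

lemma card_span_independent:
  fixes B :: "('a::{field,finite} ^ 'n) set"
  assumes "vec.independent B"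
  shows "card (vec.span B) = CARD('a) ^ card B"
proof -
  have fB: "finite B" using assms vec.finiteI_independent by blast
  let ?comb = "\<lambda>u. \<Sum>v\<in>B. u v *s v"
  have "vec.span B = ?comb ` (PiE B (\<lambda>_. UNIV))"
  proof
    show "vec.span B \<subseteq> ?comb ` (PiE B (\<lambda>_. UNIV))"
    proof
      fix x assume "x \<in> vec.span B"
      then obtain u where u: "x = ?comb u" using vec.span_finite[OF fB] by blast
      have "x = ?comb (restrict u B)" using u by (auto intro: sum.cong)
      moreover have "restrict u B \<in> PiE B (\<lambda>_. UNIV)" by auto
      ultimately show "x \<in> ?comb ` (PiE B (\<lambda>_. UNIV))" by blast
    qed
    show "?comb ` (PiE B (\<lambda>_. UNIV)) \<subseteq> vec.span B"
      using vec.span_finite[OF fB] by auto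
  qed
  moreover have "inj_on ?comb (PiE B (\<lambda>_. UNIV))"
  proof (rule inj_onI)
    fix u w assume u: "u \<in> PiE B (\<lambda>_. UNIV)" and w: "w \<in> PiE B (\<lambda>_. UNIV)" and e: "?comb u = ?comb w"
    have diff: "(\<Sum>v\<in>B. (u v - w v) *s v) = 0"
      using e by (simp add: vector_sub_rdistrib sum_subtractf)
    have "\<forall>c. (\<Sum>v\<in>B. c v *s v) = 0 \<longrightarrow> (\<forall>v\<in>B. c v = 0)"
      using assms unfolding vec.independent_explicit by blast
    from spec[OF this, of "\<lambda>v. u v - w v"] diff have "\<forall>v\<in>B. u v - w v = 0" by simp
    then show "u = w" using u w by (auto simp: PiE_iff extensional_def fun_eq_iff)
  qed
  ultimately have "card (vec.span B) = card (PiE B (\<lambda>_. UNIV :: 'a set))"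
    by (simp add: card_image)
  also have "\<dots> = CARD('a) ^ card B" by (simp add: card_PiE fB)
  finally show ?thesis .
qed

lemma card_subspace:
  fixes U :: "('a::{field,finite} ^ 'n) set"
  assumes "vec.subspace U"
  shows "card U = CARD('a) ^ vec.dim U"
proof -
  obtain B where "vec.independent B" "vec.span B = U" "card B = vec.dim U"
    using vec.basis_subspace_exists[OF assms] by blast
  then show ?thesis using card_span_independent by metis
qed

fun independent_mod :: "('a::field ^ 'n) set \<Rightarrow> ('a ^ 'n) list \<Rightarrow> bool" where
  "independent_mod K [] = True"
| "independent_mod K (v # vs) \<longleftrightarrow> independent_mod K vs \<and> v \<notin> vec.span (K \<union> set vs)"

lemma dim_Un_independent_mod:
  "independent_mod K vs \<Longrightarrow> vec.dim (K \<union> set vs) = vec.dim K + length vs"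
  by (induction vs) (simp_all add: vec.dim_insert)

lemma independent_mod_antimono:
  "independent_mod K vs \<Longrightarrow> K' \<subseteq> K \<Longrightarrow> independent_mod K' vs"
proof (induction vs)
  case (Cons v vs)
  have "vec.span (K' \<union> set vs) \<subseteq> vec.span (K \<union> set vs)"
    using Cons.prems(2) by (intro vec.span_mono) blast
  then show ?case using Cons by auto
qed simp

lemma finite_lists_length:
  "finite {vs :: ('a::finite) list. length vs = j \<and> P vs}"
  using finite_lists_length_eq[of "UNIV :: 'a set" j] by (rule finite_subset[rotated]) auto

lemma card_independent_mod_lists:
  fixes K U :: "('a::{field,finite} ^ 'n) set"
  assumes K: "vec.subspace K" and U: "vec.subspace U" and KU: "K \<subseteq> U"
  shows "card {vs. length vs = j \<and> set vs \<subseteq> U \<and> independent_mod K vs}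
       = (\<Prod>i<j. CARD('a) ^ vec.dim U - CARD('a) ^ (vec.dim K + i))"
proof (induction j)
  case 0
  have "{vs. length vs = 0 \<and> set vs \<subseteq> U \<and> independent_mod K vs} = {[]}" by auto
  then show ?case by simp
next
  case (Suc j)
  let ?lists = "\<lambda>j. {vs. length vs = j \<and> set vs \<subseteq> U \<and> independent_mod K vs}"
  let ?extensions = "\<lambda>vs. U - vec.span (K \<union> set vs)"
  have "?lists (Suc j) = (\<lambda>(vs, v). v # vs) ` (SIGMA vs:?lists j. ?extensions vs)"
  proof
    show "?lists (Suc j) \<subseteq> (\<lambda>(vs, v). v # vs) ` (SIGMA vs:?lists j. ?extensions vs)"
    proof
      fix ws assume "ws \<in> ?lists (Suc j)"
      then obtain v vs where "ws = v # vs" "vs \<in> ?lists j" "v \<in> ?extensions vs"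
        by (cases ws) auto
      then show "ws \<in> (\<lambda>(vs, v). v # vs) ` (SIGMA vs:?lists j. ?extensions vs)"
        by (auto intro!: image_eqI[of _ _ "(vs, v)"])
    qed
  qed auto
  moreover have "inj_on (\<lambda>(vs, v). v # vs) (SIGMA vs:?lists j. ?extensions vs)"
    by (auto simp: inj_on_def)
  ultimately have "card (?lists (Suc j)) = (\<Sum>vs\<in>?lists j. card (?extensions vs))"
    by (simp add: card_image card_SigmaI finite_lists_length)
  also have "\<dots> = (\<Sum>vs\<in>?lists j. CARD('a) ^ vec.dim U - CARD('a) ^ (vec.dim K + j))"
  proof (rule sum.cong[OF refl])
    fix vs assume vs: "vs \<in> ?lists j"
    have "vec.span (K \<union> set vs) \<subseteq> U"
      using vs KU U by (intro vec.span_minimal) auto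
    moreover have "card (vec.span (K \<union> set vs)) = CARD('a) ^ (vec.dim K + j)"
      using card_subspace[of "vec.span (K \<union> set vs)"] dim_Un_independent_mod[of K vs] vs by simp
    ultimately show "card (?extensions vs) = CARD('a) ^ vec.dim U - CARD('a) ^ (vec.dim K + j)"
      by (simp add: card_Diff_subset card_subspace[OF U])
  qed
  finally show ?case using Suc.IH by simp
qed

lemma dim_Un_Int:
  fixes S T :: "('a::field ^ 'n) set"
  assumes "vec.subspace S" "vec.subspace T"
  shows "vec.dim (S \<union> T) + vec.dim (S \<inter> T) = vec.dim S + vec.dim T"
proof -
  have span_S: "vec.span S = S" and span_T: "vec.span T = T" using assms by simp_all
  have "vec.span (S \<union> T) = {x + y |x y. x \<in> S \<and> y \<in> T}"
    using vec.span_Un[of S T] unfolding span_S span_T .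
  then have "vec.dim (S \<union> T) = vec.dim {x + y |x y. x \<in> S \<and> y \<in> T}"
    by (metis vec.dim_span)
  then show ?thesis using vec.dim_sums_Int[OF assms] by simp
qed

lemma dim_less_dim_Un:
  fixes Y A :: "('a::field ^ 'n) set"
  assumes "vec.subspace Y" "\<not> A \<subseteq> Y"
  shows "vec.dim Y < vec.dim (Y \<union> A)"
proof -
  have span_Y: "vec.span Y = Y" using assms(1) by simp
  have "vec.span Y \<subset> vec.span (Y \<union> A)"
  proof
    show "vec.span Y \<subseteq> vec.span (Y \<union> A)" by (rule vec.span_mono) blast
    show "vec.span Y \<noteq> vec.span (Y \<union> A)"
      using assms(2) vec.span_superset[of "Y \<union> A"] unfolding span_Y by blast
  qed
  then show ?thesis by (rule vec.dim_psubset)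
qed

text \<open>A list in \<open>U\<close> independent modulo \<open>K\<close> spans, together with \<open>K\<close>, exactly one of the
  \<open>m\<close>-spaces \<open>W\<close>, and each \<open>W\<close> contains the same number of such lists.\<close>

lemma card_subspaces_between_mult_le:
  fixes K U :: "('a::{field,finite} ^ 'n) set"
  assumes K: "vec.subspace K" and U: "vec.subspace U" and KU: "K \<subseteq> U"
    and m: "vec.dim K + j = m"
  shows "card {W. vec.subspace W \<and> K \<subseteq> W \<and> W \<subseteq> U \<and> vec.dim W = m}
           * (\<Prod>i<j. CARD('a) ^ m - CARD('a) ^ (vec.dim K + i))
         \<le> (\<Prod>i<j. CARD('a) ^ vec.dim U - CARD('a) ^ (vec.dim K + i))"
proof -
  let ?between = "{W. vec.subspace W \<and> K \<subseteq> W \<and> W \<subseteq> U \<and> vec.dim W = m}"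
  let ?bases = "\<lambda>W. {vs. length vs = j \<and> set vs \<subseteq> W \<and> independent_mod K vs}"
  let ?n_bases = "(\<Prod>i<j. CARD('a) ^ m - CARD('a) ^ (vec.dim K + i))"
  have card_bases: "card (?bases W) = ?n_bases" if "W \<in> ?between" for W
    using card_independent_mod_lists[OF K, of W j] that by auto
  have span_bases: "vec.span (K \<union> set vs) = W" if "W \<in> ?between" "vs \<in> ?bases W" for W vs
  proof -
    have sub: "vec.span (K \<union> set vs) \<subseteq> W" using that by (intro vec.span_minimal) auto
    have "vec.dim (vec.span (K \<union> set vs)) = m" using dim_Un_independent_mod[of K vs] that m by simp
    then show ?thesis using vec.subspace_dim_equal[OF _ _ sub] that by auto
  qed
  have disjoint: "\<forall>W\<in>?between. \<forall>W'\<in>?between. W \<noteq> W' \<longrightarrow> ?bases W \<inter> ?bases W' = {}"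
  proof (intro ballI impI)
    fix W W' assume "W \<in> ?between" "W' \<in> ?between" "W \<noteq> W'"
    show "?bases W \<inter> ?bases W' = {}"
    proof (rule ccontr)
      assume "?bases W \<inter> ?bases W' \<noteq> {}"
      then obtain vs where in_W: "vs \<in> ?bases W" and in_W': "vs \<in> ?bases W'" by blast
      have "W = W'" using span_bases[OF \<open>W \<in> ?between\<close> in_W] span_bases[OF \<open>W' \<in> ?between\<close> in_W'] by simp
      then show False using \<open>W \<noteq> W'\<close> by simp
    qed
  qed
  have "card (\<Union>W\<in>?between. ?bases W) = (\<Sum>W\<in>?between. card (?bases W))"
    by (rule card_UN_disjoint) (auto simp: finite_lists_length disjoint)
  also have "\<dots> = card ?between * ?n_bases" using card_bases by simp
  finally have card_Union: "card (\<Union>W\<in>?between. ?bases W) = card ?between * ?n_bases" .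
  have "(\<Union>W\<in>?between. ?bases W) \<subseteq> {vs. length vs = j \<and> set vs \<subseteq> U \<and> independent_mod K vs}" by auto
  then have "card (\<Union>W\<in>?between. ?bases W) \<le> card {vs. length vs = j \<and> set vs \<subseteq> U \<and> independent_mod K vs}"
    by (intro card_mono) (auto simp: finite_lists_length)
  then show ?thesis using card_Union card_independent_mod_lists[OF K U KU, of j] by simp
qed

lemma span_independent_mod:
  fixes K :: "('a::field ^ 'n) set"
  assumes K: "vec.subspace K" and indep: "independent_mod K vs"
  shows "vec.dim (vec.span (set vs)) = length vs" "vec.span (set vs) \<inter> K = {0}"
proof -
  have "independent_mod {0} vs"
    using indep independent_mod_antimono[of K vs "{0}"] K by (auto simp: vec.subspace_0)
  from dim_Un_independent_mod[OF this] have "vec.dim ({0} \<union> set vs) = length vs" by simp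
  moreover have "vec.dim ({0} \<union> set vs) = vec.dim (set vs)"
    using vec.dim_insert[of 0 "set vs"] by (simp add: vec.span_zero)
  ultimately show dim_span: "vec.dim (vec.span (set vs)) = length vs" by simp
  have "vec.span (K \<union> vec.span (set vs)) = vec.span (K \<union> set vs)"
    by (simp add: vec.span_Un vec.span_span)
  then have "vec.dim (vec.span (K \<union> vec.span (set vs))) = vec.dim (vec.span (K \<union> set vs))"
    by (simp only:)
  then have "vec.dim (K \<union> vec.span (set vs)) = vec.dim K + length vs"
    using dim_Un_independent_mod[OF indep] by simp
  then have "vec.dim (K \<inter> vec.span (set vs)) = 0"
    using dim_Un_Int[OF K, of "vec.span (set vs)"] dim_span by simp
  then have "K \<inter> vec.span (set vs) \<subseteq> {0}" by simp
  moreover have "0 \<in> K" using K by (rule vec.subspace_0)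
  ultimately show "vec.span (set vs) \<inter> K = {0}" using vec.span_zero by blast
qed

text \<open>A list in \<open>U\<close> independent modulo \<open>K\<close> is an ordered basis of its span, a \<open>j\<close>-space
  meeting \<open>K\<close> trivially.\<close>

lemma prod_le_card_disjoint_subspaces_mult:
  fixes K U :: "('a::{field,finite} ^ 'n) set"
  assumes K: "vec.subspace K" and U: "vec.subspace U" and KU: "K \<subseteq> U"
  shows "(\<Prod>i<j. CARD('a) ^ vec.dim U - CARD('a) ^ (vec.dim K + i))
       \<le> card {W. vec.subspace W \<and> W \<subseteq> U \<and> vec.dim W = j \<and> W \<inter> K = {0}}
           * (\<Prod>i<j. CARD('a) ^ j - CARD('a) ^ i)"
proof -
  let ?disjoint = "{W. vec.subspace W \<and> W \<subseteq> U \<and> vec.dim W = j \<and> W \<inter> K = {0}}"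
  let ?bases = "\<lambda>W. {vs. length vs = j \<and> set vs \<subseteq> W \<and> independent_mod {0} vs}"
  let ?lists = "{vs. length vs = j \<and> set vs \<subseteq> U \<and> independent_mod K vs}"
  have card_bases: "card (?bases W) = (\<Prod>i<j. CARD('a) ^ j - CARD('a) ^ i)" if "W \<in> ?disjoint" for W
    using card_independent_mod_lists[OF vec.subspace_single_0, of W j] that by auto
  have cover: "?lists \<subseteq> (\<Union>W\<in>?disjoint. ?bases W)"
  proof
    fix vs assume vs: "vs \<in> ?lists"
    have indep0: "independent_mod {0} vs"
      using vs independent_mod_antimono[of K vs "{0}"] K by (auto simp: vec.subspace_0)
    have span_U: "vec.span (set vs) \<subseteq> U" using vs U by (intro vec.span_minimal) auto
    have "vec.span (set vs) \<in> ?disjoint" using span_independent_mod[OF K] vs span_U by auto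
    moreover have "vs \<in> ?bases (vec.span (set vs))" using vs indep0 by (auto intro: vec.span_base)
    ultimately show "vs \<in> (\<Union>W\<in>?disjoint. ?bases W)" by blast
  qed
  have "card ?lists \<le> card (\<Union>W\<in>?disjoint. ?bases W)"
    by (rule card_mono[OF _ cover]) (auto simp: finite_lists_length)
  also have "\<dots> \<le> (\<Sum>W\<in>?disjoint. card (?bases W))" by (rule card_UN_le) simp
  also have "\<dots> = card ?disjoint * (\<Prod>i<j. CARD('a) ^ j - CARD('a) ^ i)" using card_bases by simp
  finally show ?thesis using card_independent_mod_lists[OF K U KU, of j] by simp
qed

lemma exists_subspace_disjoint:
  fixes K U :: "('a::{field,finite} ^ 'n) set"
  assumes K: "vec.subspace K" and U: "vec.subspace U" and KU: "K \<subseteq> U"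
    and j: "vec.dim K + j \<le> vec.dim U"
  obtains W where "vec.subspace W" "W \<subseteq> U" "vec.dim W = j" "W \<inter> K = {0}"
proof -
  have "0 < (\<Prod>i<j. CARD('a) ^ vec.dim U - CARD('a) ^ (vec.dim K + i))"
    using j card_field_ge2[where 'a='a] by (intro prod_pos) (simp add: power_strict_increasing)
  then have "{W. vec.subspace W \<and> W \<subseteq> U \<and> vec.dim W = j \<and> W \<inter> K = {0}} \<noteq> {}"
    using prod_le_card_disjoint_subspaces_mult[OF K U KU, of j] by (metis card.empty mult_0 not_le)
  then show ?thesis using that by blast
qed

lemma of_nat_prod_power_diff:
  fixes q :: nat
  assumes "1 \<le> q" "k + j \<le> n"
  shows "int (\<Prod>i<j. q ^ n - q ^ (k + i)) = (\<Prod>i<j. int q ^ n - int q ^ (k + i))"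
  unfolding of_nat_prod using assms
  by (intro prod.cong refl) (simp add: of_nat_diff power_increasing)

lemma prod_power_diff_pos:
  fixes x :: int
  assumes "2 \<le> x" "k + j \<le> n"
  shows "0 < (\<Prod>i<j. x ^ n - x ^ (k + i))"
  using assms by (intro prod_pos) (simp add: power_strict_increasing)

lemma card_subspaces_between_le:
  fixes K U :: "('a::{field,finite} ^ 'n) set"
  defines "x \<equiv> int CARD('a)"
  assumes K: "vec.subspace K" and U: "vec.subspace U" and KU: "K \<subseteq> U"
    and m: "vec.dim K + j = m" "m \<le> vec.dim U"
    and R: "(\<Prod>i<j. x ^ vec.dim U - x ^ (vec.dim K + i)) = R * (\<Prod>i<j. x ^ m - x ^ (vec.dim K + i))"
  shows "int (card {W. vec.subspace W \<and> K \<subseteq> W \<and> W \<subseteq> U \<and> vec.dim W = m}) \<le> R"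
proof -
  let ?P = "\<Prod>i<j. x ^ m - x ^ (vec.dim K + i)"
  have q: "1 \<le> CARD('a)" "2 \<le> x" unfolding x_def using card_field_ge2[where 'a='a] by simp_all
  have P: "int (\<Prod>i<j. CARD('a) ^ m - CARD('a) ^ (vec.dim K + i)) = ?P"
    unfolding x_def using of_nat_prod_power_diff[OF q(1)] m by simp
  have "int (\<Prod>i<j. CARD('a) ^ vec.dim U - CARD('a) ^ (vec.dim K + i))
      = (\<Prod>i<j. x ^ vec.dim U - x ^ (vec.dim K + i))"
    unfolding x_def using m by (intro of_nat_prod_power_diff[OF q(1)]) simp
  then have "int (\<Prod>i<j. CARD('a) ^ vec.dim U - CARD('a) ^ (vec.dim K + i)) = R * ?P"
    using R by simp
  moreover have "int (card {W. vec.subspace W \<and> K \<subseteq> W \<and> W \<subseteq> U \<and> vec.dim W = m})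
      * int (\<Prod>i<j. CARD('a) ^ m - CARD('a) ^ (vec.dim K + i))
      \<le> int (\<Prod>i<j. CARD('a) ^ vec.dim U - CARD('a) ^ (vec.dim K + i))"
    using card_subspaces_between_mult_le[OF K U KU m(1)] unfolding of_nat_mult[symmetric] of_nat_le_iff .
  ultimately have "int (card {W. vec.subspace W \<and> K \<subseteq> W \<and> W \<subseteq> U \<and> vec.dim W = m}) * ?P \<le> R * ?P"
    unfolding P by simp
  then show ?thesis using prod_power_diff_pos[OF q(2), of "vec.dim K" j m] m by simp
qed

lemma card_disjoint_subspaces_ge:
  fixes K U :: "('a::{field,finite} ^ 'n) set"
  defines "x \<equiv> int CARD('a)"
  assumes K: "vec.subspace K" and U: "vec.subspace U" and KU: "K \<subseteq> U"
    and j: "vec.dim K + j \<le> vec.dim U"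
    and R: "(\<Prod>i<j. x ^ vec.dim U - x ^ (vec.dim K + i)) = R * (\<Prod>i<j. x ^ j - x ^ i)"
  shows "R \<le> int (card {W. vec.subspace W \<and> W \<subseteq> U \<and> vec.dim W = j \<and> W \<inter> K = {0}})"
proof -
  let ?P = "\<Prod>i<j. x ^ j - x ^ i"
  have q: "1 \<le> CARD('a)" "2 \<le> x" unfolding x_def using card_field_ge2[where 'a='a] by simp_all
  have P: "int (\<Prod>i<j. CARD('a) ^ j - CARD('a) ^ i) = ?P"
    unfolding x_def using of_nat_prod_power_diff[OF q(1), of 0 j j] by simp
  have "int (\<Prod>i<j. CARD('a) ^ vec.dim U - CARD('a) ^ (vec.dim K + i))
      = (\<Prod>i<j. x ^ vec.dim U - x ^ (vec.dim K + i))"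
    unfolding x_def by (rule of_nat_prod_power_diff[OF q(1) j])
  then have "int (\<Prod>i<j. CARD('a) ^ vec.dim U - CARD('a) ^ (vec.dim K + i)) = R * ?P"
    using R by simp
  moreover have "int (\<Prod>i<j. CARD('a) ^ vec.dim U - CARD('a) ^ (vec.dim K + i))
      \<le> int (card {W. vec.subspace W \<and> W \<subseteq> U \<and> vec.dim W = j \<and> W \<inter> K = {0}})
        * int (\<Prod>i<j. CARD('a) ^ j - CARD('a) ^ i)"
    using prod_le_card_disjoint_subspaces_mult[OF K U KU, of j]
    unfolding of_nat_mult[symmetric] of_nat_le_iff .
  ultimately have "R * ?P \<le> int (card {W. vec.subspace W \<and> W \<subseteq> U \<and> vec.dim W = j \<and> W \<inter> K = {0}}) * ?P"
    unfolding P by simp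
  then show ?thesis using prod_power_diff_pos[OF q(2), of 0 j j] by simp
qed

section \<open>Hyperplanes\<close>

lemma dim_UNIV_cart: "vec.dim (UNIV :: ('a::field ^ 'n) set) = CARD('n)"
  by (simp add: card_cart_basis)

lemma dim_le_card_index: "vec.dim (S :: ('a::field ^ 'n) set) \<le> CARD('n)"
  using vec.dim_subset_UNIV[of S] by (simp add: vec.dimension_def card_cart_basis)

lemma exists_superspace_dim:
  fixes U :: "('a::field ^ 'n) set"
  assumes U: "vec.subspace U" and k: "vec.dim U \<le> k" "k \<le> CARD('n)"
  obtains W where "vec.subspace W" "U \<subseteq> W" "vec.dim W = k"
proof -
  have "\<exists>W. vec.subspace W \<and> U \<subseteq> W \<and> vec.dim W = vec.dim U + d" if "vec.dim U + d \<le> CARD('n)" for d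
    using that
  proof (induction d)
    case 0 then show ?case using U by auto
  next
    case (Suc d)
    then obtain W where W: "vec.subspace W" "U \<subseteq> W" "vec.dim W = vec.dim U + d" by auto
    have "W \<noteq> UNIV" using W(3) Suc.prems dim_UNIV_cart[where 'a='a and 'n='n] by auto
    then obtain v where v: "v \<notin> W" by blast
    have span_W: "vec.span W = W" using W(1) by simp
    have "vec.dim (insert v W) = vec.dim W + 1"
      using v unfolding vec.dim_insert span_W by simp
    then have "vec.dim (vec.span (insert v W)) = vec.dim U + Suc d" using W(3) by simp
    moreover have "U \<subseteq> vec.span (insert v W)" using W(2) vec.span_superset by blast
    ultimately show ?case by (intro exI[of _ "vec.span (insert v W)"]) simp
  qed
  then show ?thesis using that k by (metis le_add_diff_inverse)
qed

definition hyperplanes_through :: "('a::field ^ 'n) set \<Rightarrow> ('a ^ 'n) set set" where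
  "hyperplanes_through U = {G. vec.subspace G \<and> vec.dim G = CARD('n) - 1 \<and> U \<subseteq> G}"

lemma exists_hyperplane_through:
  fixes U :: "('a::field ^ 'n) set"
  assumes "vec.subspace U" "vec.dim U < CARD('n)"
  obtains G where "G \<in> hyperplanes_through U"
proof -
  have "vec.dim U \<le> CARD('n) - 1" using assms(2) by simp
  then obtain G where "vec.subspace G" "U \<subseteq> G" "vec.dim G = CARD('n) - 1"
    using exists_superspace_dim[OF assms(1) _ diff_le_self] by blast
  then show thesis using that unfolding hyperplanes_through_def by blast
qed

lemma hyperplanes_through_mono: "U \<subseteq> V \<Longrightarrow> hyperplanes_through V \<subseteq> hyperplanes_through U"
  unfolding hyperplanes_through_def by blast

lemma dim_Int_hyperplane:
  fixes G S :: "('a::field ^ 'n) set"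
  assumes G: "vec.subspace G" "vec.dim G = CARD('n) - 1" and S: "vec.subspace S" "\<not> S \<subseteq> G"
  shows "vec.dim (G \<inter> S) + 1 = vec.dim S"
proof -
  have "vec.dim G < vec.dim (G \<union> S)" by (rule dim_less_dim_Un[OF G(1) S(2)])
  then have "vec.dim (G \<union> S) = CARD('n)" using dim_le_card_index[of "G \<union> S"] G(2) by simp
  moreover have "0 < CARD('n)" by simp
  ultimately show ?thesis using dim_Un_Int[OF G(1) S(1)] G(2) by linarith
qed

lemma dim_Int_hyperplanes:
  fixes G G' :: "('a::field ^ 'n) set"
  assumes "G \<in> hyperplanes_through U" "G' \<in> hyperplanes_through U'" "G \<noteq> G'"
  shows "vec.subspace (G \<inter> G')" "vec.dim (G \<inter> G') + 2 = CARD('n)"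
proof -
  have "\<not> G' \<subseteq> G"
    using vec.subspace_dim_equal[of G' G] assms by (auto simp: hyperplanes_through_def)
  then show "vec.dim (G \<inter> G') + 2 = CARD('n)"
    using dim_Int_hyperplane[of G G'] assms by (auto simp: hyperplanes_through_def)
  show "vec.subspace (G \<inter> G')"
    using assms by (auto simp: hyperplanes_through_def intro: vec.subspace_inter)
qed

lemma Int_hyperplanes_eq:
  fixes G G' K :: "('a::field ^ 'n) set"
  assumes "G \<in> hyperplanes_through U" "G' \<in> hyperplanes_through U'" "G \<noteq> G'"
    and "vec.subspace K" "vec.dim K + 2 = CARD('n)" "K \<subseteq> G \<inter> G'"
  shows "G \<inter> G' = K"
  using vec.subspace_dim_equal[OF assms(4) dim_Int_hyperplanes(1)[OF assms(1-3)] assms(6)]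
    dim_Int_hyperplanes(2)[OF assms(1-3)] assms(5) by simp

lemma subspace_eq_Int_hyperplane:
  fixes L W T :: "('a::field ^ 'n) set"
  assumes L: "vec.subspace L" and W: "W \<in> hyperplanes_through U" "\<not> L \<subseteq> W"
    and T: "vec.subspace T" "vec.dim T + 1 = vec.dim L" "T \<subseteq> L \<inter> W"
  shows "T = L \<inter> W"
proof -
  have W': "vec.subspace W" "vec.dim W = CARD('n) - 1" using W(1) by (auto simp: hyperplanes_through_def)
  have "vec.dim (W \<inter> L) + 1 = vec.dim L" by (rule dim_Int_hyperplane[OF W' L W(2)])
  moreover have "vec.subspace (L \<inter> W)" using vec.subspace_inter[OF L W'(1)] .
  ultimately show ?thesis using vec.subspace_dim_equal[OF T(1) _ T(3)] T(2) by (simp add: Int_commute)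
qed

lemma Int_hyperplanes_through_axis:
  fixes L X G :: "('a::field ^ 'n) set"
  assumes L: "vec.subspace L" "vec.dim L + 2 = CARD('n)"
    and "X \<in> hyperplanes_through L" "G \<in> hyperplanes_through L" "X \<noteq> G"
  shows "X \<inter> G = L"
proof (rule Int_hyperplanes_eq[OF assms(3-5) L])
  show "L \<subseteq> X \<inter> G" using assms(3,4) by (auto simp: hyperplanes_through_def)
qed

lemma Int_hyperplane_subset_axis:
  fixes L X G Y :: "('a::field ^ 'n) set"
  assumes L: "vec.subspace L" "vec.dim L + 2 = CARD('n)"
    and X: "X \<in> hyperplanes_through L" and G: "G \<in> hyperplanes_through L" "Y \<subseteq> G" and "\<not> Y \<subseteq> X"
  shows "X \<inter> Y \<subseteq> L"
proof -
  have "X \<noteq> G" using G(2) \<open>\<not> Y \<subseteq> X\<close> by blast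
  then have "X \<inter> G = L" by (rule Int_hyperplanes_through_axis[OF L X G(1)])
  then show ?thesis using G(2) by blast
qed

lemma card_hyperplanes_through_Diff_le:
  fixes S L :: "('a::{field,finite} ^ 'n) set"
  assumes "G \<in> hyperplanes_through S" "G \<in> hyperplanes_through L"
    and "card (hyperplanes_through S) \<le> c + 1"
  shows "card (hyperplanes_through S - hyperplanes_through L) \<le> c"
proof -
  have "card (hyperplanes_through S - hyperplanes_through L) < card (hyperplanes_through S)"
    using assms(1,2) by (intro psubset_card_mono) auto
  then show ?thesis using assms(3) by linarith
qed

lemma dim_Int_ge:
  fixes S T U :: "('a::field ^ 'n) set"
  assumes "vec.subspace S" "vec.subspace T" "vec.subspace U" "S \<subseteq> U" "T \<subseteq> U"
  shows "vec.dim S + vec.dim T \<le> vec.dim U + vec.dim (S \<inter> T)"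
proof -
  have "vec.span (S \<union> T) \<subseteq> U" using assms by (intro vec.span_minimal) auto
  then have "vec.dim (vec.span (S \<union> T)) \<le> vec.dim U" by (rule vec.dim_subset)
  then show ?thesis using dim_Un_Int[OF assms(1,2)] by simp
qed

lemma exists_nonzero_in_Int_if_dim_gt:
  fixes S T U :: "('a::field ^ 'n) set"
  assumes "vec.subspace S" "vec.subspace T" "vec.subspace U" "S \<subseteq> U" "T \<subseteq> U"
    and "vec.dim U < vec.dim S + vec.dim T"
  shows "\<exists>x\<in>S \<inter> T. x \<noteq> 0"
proof (rule ccontr)
  assume "\<not> (\<exists>x\<in>S \<inter> T. x \<noteq> 0)"
  then have "S \<inter> T \<subseteq> {0}" by blast
  then have "vec.dim (S \<inter> T) = 0" using vec.dim_subset[of "S \<inter> T" "{0}"] by simp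
  then show False using dim_Int_ge[OF assms(1-5)] assms(6) by linarith
qed

section \<open>Counting hyperplanes and solids\<close>

lemma card_hyperplanes_through_solid:
  fixes T :: "('a::{field,finite} ^ 7) set"
  assumes "vec.subspace T" "vec.dim T = 4"
  shows "card (hyperplanes_through T) \<le> CARD('a)^2 + CARD('a) + 1"
proof -
  have "hyperplanes_through T = {W. vec.subspace W \<and> T \<subseteq> W \<and> W \<subseteq> UNIV \<and> vec.dim W = 6}"
    by (auto simp: hyperplanes_through_def)
  moreover have "int (card {W. vec.subspace W \<and> T \<subseteq> W \<and> W \<subseteq> UNIV \<and> vec.dim W = 6})
      \<le> int (CARD('a)^2 + CARD('a) + 1)"
  proof (rule card_subspaces_between_le[where j = 2])
    let ?x = "int CARD('a)"
    show "(\<Prod>i<2. ?x ^ vec.dim (UNIV :: ('a ^ 7) set) - ?x ^ (vec.dim T + i))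
        = int (CARD('a)^2 + CARD('a) + 1) * (\<Prod>i<2. ?x ^ 6 - ?x ^ (vec.dim T + i))"
      by (simp add: assms card_cart_basis lessThan_nat_numeral) algebra
  qed (simp_all add: assms vec.subspace_UNIV card_cart_basis)
  ultimately show ?thesis by (simp only: of_nat_le_iff)
qed

lemma card_hyperplanes_through_5space:
  fixes L :: "('a::{field,finite} ^ 7) set"
  assumes "vec.subspace L" "vec.dim L = 5"
  shows "card (hyperplanes_through L) \<le> CARD('a) + 1"
proof -
  have "hyperplanes_through L = {W. vec.subspace W \<and> L \<subseteq> W \<and> W \<subseteq> UNIV \<and> vec.dim W = 6}"
    by (auto simp: hyperplanes_through_def)
  moreover have "int (card {W. vec.subspace W \<and> L \<subseteq> W \<and> W \<subseteq> UNIV \<and> vec.dim W = 6})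
      \<le> int (CARD('a) + 1)"
  proof (rule card_subspaces_between_le[where j = 1])
    let ?x = "int CARD('a)"
    show "(\<Prod>i<1. ?x ^ vec.dim (UNIV :: ('a ^ 7) set) - ?x ^ (vec.dim L + i))
        = int (CARD('a) + 1) * (\<Prod>i<1. ?x ^ 6 - ?x ^ (vec.dim L + i))"
      by (simp add: assms card_cart_basis lessThan_nat_numeral) algebra
  qed (simp_all add: assms vec.subspace_UNIV card_cart_basis)
  ultimately show ?thesis by (simp only: of_nat_le_iff)
qed

lemma card_hyperplanes_through_dim_ge5:
  fixes Q :: "('a::{field,finite} ^ 7) set"
  assumes "5 \<le> vec.dim Q"
  shows "card (hyperplanes_through Q) \<le> CARD('a) + 1"
proof -
  obtain L where L: "vec.subspace L" "L \<subseteq> vec.span Q" "vec.dim L = 5"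
    using vec.choose_subspace_of_subspace[OF assms] by blast
  have "hyperplanes_through Q \<subseteq> hyperplanes_through L"
  proof
    fix G assume G: "G \<in> hyperplanes_through Q"
    then have "vec.span Q \<subseteq> G" unfolding hyperplanes_through_def using vec.span_minimal by blast
    then show "G \<in> hyperplanes_through L" using G L(2) unfolding hyperplanes_through_def by auto
  qed
  then have "card (hyperplanes_through Q) \<le> card (hyperplanes_through L)" by (intro card_mono) auto
  also have "\<dots> \<le> CARD('a) + 1" using card_hyperplanes_through_5space[OF L(1,3)] .
  finally show ?thesis .
qed

lemma card_solids_in_5space:
  fixes L :: "('a::{field,finite} ^ 'n) set"
  assumes "vec.subspace L" "vec.dim L = 5"
  shows "card {T. vec.subspace T \<and> vec.dim T = 4 \<and> T \<subseteq> L}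
    \<le> CARD('a)^4 + CARD('a)^3 + CARD('a)^2 + CARD('a) + 1"
proof -
  have "{T. vec.subspace T \<and> vec.dim T = 4 \<and> T \<subseteq> L} = {W. vec.subspace W \<and> {0} \<subseteq> W \<and> W \<subseteq> L \<and> vec.dim W = 4}"
    using vec.subspace_0 by blast
  moreover have "int (card {W. vec.subspace W \<and> {0} \<subseteq> W \<and> W \<subseteq> L \<and> vec.dim W = 4})
      \<le> int (CARD('a)^4 + CARD('a)^3 + CARD('a)^2 + CARD('a) + 1)"
  proof (rule card_subspaces_between_le[where j = 4])
    let ?x = "int CARD('a)"
    show "(\<Prod>i<4. ?x ^ vec.dim L - ?x ^ (vec.dim {0 :: 'a ^ 'n} + i))
        = int (CARD('a)^4 + CARD('a)^3 + CARD('a)^2 + CARD('a) + 1)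
          * (\<Prod>i<4. ?x ^ 4 - ?x ^ (vec.dim {0 :: 'a ^ 'n} + i))"
      by (simp add: assms lessThan_nat_numeral) algebra
  qed (simp_all add: assms vec.subspace_0)
  ultimately show ?thesis by (simp only: of_nat_le_iff)
qed

lemma card_solids_through_plane:
  fixes R :: "('a::{field,finite} ^ 7) set"
  assumes "vec.subspace R" "vec.dim R = 3"
  shows "card {T. vec.subspace T \<and> vec.dim T = 4 \<and> R \<subseteq> T} \<le> CARD('a)^3 + CARD('a)^2 + CARD('a) + 1"
proof -
  have "{T. vec.subspace T \<and> vec.dim T = 4 \<and> R \<subseteq> T} = {W. vec.subspace W \<and> R \<subseteq> W \<and> W \<subseteq> UNIV \<and> vec.dim W = 4}"
    by auto
  moreover have "int (card {W. vec.subspace W \<and> R \<subseteq> W \<and> W \<subseteq> UNIV \<and> vec.dim W = 4})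
      \<le> int (CARD('a)^3 + CARD('a)^2 + CARD('a) + 1)"
  proof (rule card_subspaces_between_le[where j = 1])
    let ?x = "int CARD('a)"
    show "(\<Prod>i<1. ?x ^ vec.dim (UNIV :: ('a ^ 7) set) - ?x ^ (vec.dim R + i))
        = int (CARD('a)^3 + CARD('a)^2 + CARD('a) + 1) * (\<Prod>i<1. ?x ^ 4 - ?x ^ (vec.dim R + i))"
      by (simp add: assms card_cart_basis lessThan_nat_numeral) algebra
  qed (simp_all add: assms vec.subspace_UNIV card_cart_basis)
  ultimately show ?thesis by (simp only: of_nat_le_iff)
qed

text \<open>The polynomial in the theorem counts the solids of \<open>PG(5,q)\<close> meeting a fixed line:
  all \<open>[6 choose 4]\<^sub>q\<close> solids minus the \<open>q\<^sup>8\<close> ones disjoint from it.\<close>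

definition solids_meeting_line :: "nat \<Rightarrow> nat" where
  "solids_meeting_line q = q^7 + 2*q^6 + 2*q^5 + 3*q^4 + 2*q^3 + 2*q^2 + q + 1"

lemma card_solids_meeting_line:
  fixes H l :: "('a::{field,finite} ^ 'n) set"
  assumes H: "vec.subspace H" "vec.dim H = 6" and l: "vec.subspace l" "vec.dim l = 2" "l \<subseteq> H"
  shows "card {T. vec.subspace T \<and> vec.dim T = 4 \<and> T \<subseteq> H \<and> T \<inter> l \<noteq> {0}}
    \<le> solids_meeting_line CARD('a)"
proof -
  let ?x = "int CARD('a)"
  let ?all = "{T. vec.subspace T \<and> vec.dim T = 4 \<and> T \<subseteq> H}"
  let ?disjoint = "{W. vec.subspace W \<and> W \<subseteq> H \<and> vec.dim W = 4 \<and> W \<inter> l = {0}}"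
  have "?all = {W. vec.subspace W \<and> {0} \<subseteq> W \<and> W \<subseteq> H \<and> vec.dim W = 4}"
    using vec.subspace_0 by blast
  moreover have "int (card {W. vec.subspace W \<and> {0} \<subseteq> W \<and> W \<subseteq> H \<and> vec.dim W = 4})
      \<le> ?x^8 + int (solids_meeting_line CARD('a))"
  proof (rule card_subspaces_between_le[where j = 4])
    show "(\<Prod>i<4. ?x ^ vec.dim H - ?x ^ (vec.dim {0 :: 'a ^ 'n} + i))
        = (?x^8 + int (solids_meeting_line CARD('a))) * (\<Prod>i<4. ?x ^ 4 - ?x ^ (vec.dim {0 :: 'a ^ 'n} + i))"
      by (simp add: H solids_meeting_line_def lessThan_nat_numeral) algebra
  qed (simp_all add: H vec.subspace_0)
  ultimately have all: "int (card ?all) \<le> ?x^8 + int (solids_meeting_line CARD('a))" by simp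
  have disjoint: "?x^8 \<le> int (card ?disjoint)"
  proof (rule card_disjoint_subspaces_ge)
    show "(\<Prod>i<4. ?x ^ vec.dim H - ?x ^ (vec.dim l + i)) = ?x^8 * (\<Prod>i<4. ?x ^ 4 - ?x ^ i)"
      by (simp add: H l lessThan_nat_numeral) algebra
  qed (simp_all add: H l)
  have "?disjoint \<subseteq> ?all" by auto
  then have "int (card (?all - ?disjoint)) = int (card ?all) - int (card ?disjoint)"
    by (simp add: card_Diff_subset card_mono of_nat_diff)
  also have "\<dots> \<le> int (solids_meeting_line CARD('a))" using all disjoint by linarith
  finally have "card (?all - ?disjoint) \<le> solids_meeting_line CARD('a)" by (simp only: of_nat_le_iff)
  moreover have "{T. vec.subspace T \<and> vec.dim T = 4 \<and> T \<subseteq> H \<and> T \<inter> l \<noteq> {0}} = ?all - ?disjoint"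
    by auto
  ultimately show ?thesis by simp
qed

section \<open>Solids pairwise lying in a common hyperplane\<close>

definition pairwise_cohyperplanar :: "('a::field ^ 'n) set set \<Rightarrow> bool" where
  "pairwise_cohyperplanar SS \<longleftrightarrow> (\<forall>T\<in>SS. \<forall>T'\<in>SS. \<exists>G\<in>hyperplanes_through T. T' \<subseteq> G)"

lemma solids_meeting_in_line_cohyperplanar:
  fixes T T' :: "('a::field ^ 7) set"
  assumes "vec.subspace T" "vec.dim T = 4" "vec.subspace T'" "vec.dim T' = 4" "2 \<le> vec.dim (T \<inter> T')"
  shows "\<exists>G\<in>hyperplanes_through T. T' \<subseteq> G"
proof -
  have "vec.dim (vec.span (T \<union> T')) < CARD(7)" using dim_Un_Int[of T T'] assms by simp
  then obtain G where G: "G \<in> hyperplanes_through (vec.span (T \<union> T'))"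
    by (rule exists_hyperplane_through[OF vec.subspace_span])
  have "T \<union> T' \<subseteq> vec.span (T \<union> T')" by (rule vec.span_superset)
  then have "G \<in> hyperplanes_through T" "T' \<subseteq> G"
    using G unfolding hyperplanes_through_def by auto
  then show ?thesis by blast
qed

lemma card_cohyperplanar_solids_outside_through_plane:
  fixes SS :: "('a::{field,finite} ^ 7) set set"
  assumes solids: "\<forall>T\<in>SS. vec.subspace T \<and> vec.dim T = 4" and cohyp: "pairwise_cohyperplanar SS"
    and X: "X \<in> hyperplanes_through {}" and Y0: "Y0 \<in> SS" "\<not> Y0 \<subseteq> X"
    and through: "\<forall>Y\<in>SS. \<not> Y \<subseteq> X \<longrightarrow> X \<inter> Y0 \<subseteq> Y"
  shows "card SS \<le> (CARD('a)^2 + CARD('a) + 1) * (CARD('a)^4 + CARD('a)^3 + CARD('a)^2 + CARD('a) + 1)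
                    + (CARD('a)^3 + CARD('a)^2 + CARD('a) + 1)"
proof -
  let ?solids_in = "\<lambda>L. {T. vec.subspace T \<and> vec.dim T = 4 \<and> T \<subseteq> L}"
  have X': "vec.subspace X" "vec.dim X = 6" using X by (auto simp: hyperplanes_through_def)
  have Y0': "vec.subspace Y0" "vec.dim Y0 = 4" using solids Y0 by auto
  have plane: "vec.subspace (X \<inter> Y0)" "vec.dim (X \<inter> Y0) = 3"
    using dim_Int_hyperplane[of X Y0] X' Y0' Y0(2) vec.subspace_inter[OF X'(1) Y0'(1)] by auto
  have "SS \<subseteq> (\<Union>Z\<in>hyperplanes_through Y0. ?solids_in (X \<inter> Z))
      \<union> {T. vec.subspace T \<and> vec.dim T = 4 \<and> X \<inter> Y0 \<subseteq> T}" (is "_ \<subseteq> ?in_hyperplanes \<union> ?through_plane")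
  proof
    fix T assume T: "T \<in> SS"
    obtain Z where "Z \<in> hyperplanes_through Y0" "T \<subseteq> Z"
      using cohyp Y0(1) T unfolding pairwise_cohyperplanar_def by blast
    moreover have "vec.subspace T" "vec.dim T = 4" using T solids by auto
    ultimately show "T \<in> ?in_hyperplanes \<union> ?through_plane"
      using through T by (cases "T \<subseteq> X") auto
  qed
  then have "card SS \<le> card ?in_hyperplanes + card ?through_plane"
    by (rule card_le_if_subset_Un[rotated]) simp
  also have "card ?in_hyperplanes
      \<le> card (hyperplanes_through Y0) * (CARD('a)^4 + CARD('a)^3 + CARD('a)^2 + CARD('a) + 1)"
  proof (rule card_UN_le_card_mult)
    fix Z assume Z: "Z \<in> hyperplanes_through Y0"
    then have "X \<noteq> Z" using Y0(2) by (auto simp: hyperplanes_through_def)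
    then have "vec.subspace (X \<inter> Z)" "vec.dim (X \<inter> Z) = 5"
      using dim_Int_hyperplanes[OF X Z] by simp_all
    then show "card (?solids_in (X \<inter> Z)) \<le> CARD('a)^4 + CARD('a)^3 + CARD('a)^2 + CARD('a) + 1"
      by (rule card_solids_in_5space)
  qed simp
  also have "\<dots> \<le> (CARD('a)^2 + CARD('a) + 1) * (CARD('a)^4 + CARD('a)^3 + CARD('a)^2 + CARD('a) + 1)"
    using card_hyperplanes_through_solid[OF Y0'] by (rule mult_right_mono) simp
  finally show ?thesis using card_solids_through_plane[OF plane] by simp
qed

lemma cohyperplanar_solid_eq_Int_hyperplanes:
  fixes SS :: "('a::{field,finite} ^ 7) set set"
  assumes solids: "\<forall>T\<in>SS. vec.subspace T \<and> vec.dim T = 4" and cohyp: "pairwise_cohyperplanar SS"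
    and A: "A \<in> SS" and escaping: "\<forall>X\<in>hyperplanes_through A. escaping X \<in> SS \<and> \<not> escaping X \<subseteq> X"
    and transversal: "\<forall>L. vec.subspace L \<and> vec.dim L = 5 \<longrightarrow>
      transversal L \<in> SS \<and> (\<forall>G\<in>hyperplanes_through L. \<not> transversal L \<subseteq> G)"
    and T: "T \<in> SS"
  shows "\<exists>X\<in>hyperplanes_through A. \<exists>Z\<in>hyperplanes_through (escaping X).
    \<exists>W\<in>hyperplanes_through (transversal (X \<inter> Z)). T = X \<inter> Z \<inter> W"
proof -
  have T': "vec.subspace T" "vec.dim T = 4" using solids T by auto
  obtain X where X: "X \<in> hyperplanes_through A" "T \<subseteq> X"
    using cohyp A T unfolding pairwise_cohyperplanar_def by blast
  obtain Z where Z: "Z \<in> hyperplanes_through (escaping X)" "T \<subseteq> Z"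
    using cohyp escaping X(1) T unfolding pairwise_cohyperplanar_def by blast
  have "X \<noteq> Z" using escaping X(1) Z(1) by (auto simp: hyperplanes_through_def)
  then have L: "vec.subspace (X \<inter> Z)" "vec.dim (X \<inter> Z) = 5"
    using dim_Int_hyperplanes[OF X(1) Z(1)] by simp_all
  obtain W where W: "W \<in> hyperplanes_through (transversal (X \<inter> Z))" "T \<subseteq> W"
    using cohyp transversal L T unfolding pairwise_cohyperplanar_def by blast
  have "\<not> X \<inter> Z \<subseteq> W"
  proof
    assume "X \<inter> Z \<subseteq> W"
    then have "W \<in> hyperplanes_through (X \<inter> Z)" using W(1) by (auto simp: hyperplanes_through_def)
    then show False using transversal L W(1) by (auto simp: hyperplanes_through_def)
  qed
  then have "T = X \<inter> Z \<inter> W"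
    using subspace_eq_Int_hyperplane[OF L(1) W(1)] T' L(2) X(2) Z(2) W(2) by simp
  then show ?thesis using X(1) Z(1) W(1) by blast
qed

lemma card_cohyperplanar_solids_without_axis:
  fixes SS :: "('a::{field,finite} ^ 7) set set"
  assumes solids: "\<forall>T\<in>SS. vec.subspace T \<and> vec.dim T = 4" and cohyp: "pairwise_cohyperplanar SS"
    and not_in_hyperplane: "\<forall>H\<in>hyperplanes_through {}. \<exists>T\<in>SS. \<not> T \<subseteq> H"
    and no_axis: "\<forall>L. vec.subspace L \<and> vec.dim L = 5 \<longrightarrow> (\<exists>T\<in>SS. \<forall>G\<in>hyperplanes_through L. \<not> T \<subseteq> G)"
    and A: "A \<in> SS"
  shows "card SS \<le> (CARD('a)^2 + CARD('a) + 1) ^ 3"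
proof -
  let ?t = "CARD('a)^2 + CARD('a) + 1"
  have "\<forall>X\<in>hyperplanes_through A. \<exists>T. T \<in> SS \<and> \<not> T \<subseteq> X"
  proof
    fix X assume "X \<in> hyperplanes_through A"
    then have "X \<in> hyperplanes_through {}" using hyperplanes_through_mono[of "{}" A] by blast
    then show "\<exists>T. T \<in> SS \<and> \<not> T \<subseteq> X" using not_in_hyperplane by blast
  qed
  from bchoice[OF this] obtain escaping
    where escaping: "\<forall>X\<in>hyperplanes_through A. escaping X \<in> SS \<and> \<not> escaping X \<subseteq> X"
    by blast
  have "\<forall>L. \<exists>T. vec.subspace L \<and> vec.dim L = 5 \<longrightarrow> T \<in> SS \<and> (\<forall>G\<in>hyperplanes_through L. \<not> T \<subseteq> G)"
    using no_axis by blast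
  from choice[OF this] obtain transversal where transversal: "\<forall>L. vec.subspace L \<and> vec.dim L = 5 \<longrightarrow>
      transversal L \<in> SS \<and> (\<forall>G\<in>hyperplanes_through L. \<not> transversal L \<subseteq> G)"
    by blast
  have in_5space: "vec.subspace (X \<inter> Z) \<and> vec.dim (X \<inter> Z) = 5"
    if "X \<in> hyperplanes_through A" "Z \<in> hyperplanes_through (escaping X)" for X Z
  proof -
    have "X \<noteq> Z" using escaping that by (auto simp: hyperplanes_through_def)
    then show ?thesis using dim_Int_hyperplanes[OF that] by simp
  qed
  define triples where "triples = (SIGMA X:hyperplanes_through A. SIGMA Z:hyperplanes_through (escaping X).
      hyperplanes_through (transversal (X \<inter> Z)))"
  have "SS \<subseteq> (\<lambda>(X, Z, W). X \<inter> Z \<inter> W) ` triples"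
  proof
    fix T assume "T \<in> SS"
    from cohyperplanar_solid_eq_Int_hyperplanes[OF solids cohyp A escaping transversal this]
    show "T \<in> (\<lambda>(X, Z, W). X \<inter> Z \<inter> W) ` triples"
      unfolding triples_def by (auto intro!: rev_image_eqI)
  qed
  then have "card SS \<le> card ((\<lambda>(X, Z, W). X \<inter> Z \<inter> W) ` triples)" by (rule card_mono[rotated]) simp
  also have "\<dots> \<le> card triples" by (rule card_image_le) simp
  also have "\<dots> = (\<Sum>X\<in>hyperplanes_through A. \<Sum>Z\<in>hyperplanes_through (escaping X).
      card (hyperplanes_through (transversal (X \<inter> Z))))"
    unfolding triples_def by (simp add: card_SigmaI)
  also have "\<dots> \<le> (\<Sum>X\<in>hyperplanes_through A. card (hyperplanes_through (escaping X)) * ?t)"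
  proof (intro sum_mono sum_le_card_mult)
    fix X Z assume "X \<in> hyperplanes_through A" "Z \<in> hyperplanes_through (escaping X)"
    then have "transversal (X \<inter> Z) \<in> SS" using transversal in_5space by blast
    then show "card (hyperplanes_through (transversal (X \<inter> Z))) \<le> ?t"
      using card_hyperplanes_through_solid[of "transversal (X \<inter> Z)"] solids by simp
  qed
  also have "\<dots> \<le> card (hyperplanes_through A) * (?t * ?t)"
  proof (intro sum_le_card_mult mult_right_mono)
    fix X assume "X \<in> hyperplanes_through A"
    then have "escaping X \<in> SS" using escaping by blast
    then show "card (hyperplanes_through (escaping X)) \<le> ?t"
      using card_hyperplanes_through_solid[of "escaping X"] solids by simp
  qed simp
  also have "\<dots> \<le> ?t * (?t * ?t)"
    using card_hyperplanes_through_solid[of A] solids A by (intro mult_right_mono) simp_all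
  finally show ?thesis by (simp only: power3_eq_cube mult.assoc)
qed

lemma cohyperplanar_solid_off_axis_cases:
  fixes SS :: "('a::{field,finite} ^ 7) set set"
  assumes solids: "\<forall>T\<in>SS. vec.subspace T \<and> vec.dim T = 4" and cohyp: "pairwise_cohyperplanar SS"
    and L: "vec.subspace L" "vec.dim L = 5" and X: "X \<in> hyperplanes_through L"
    and Y: "Y1 \<in> SS" "Y2 \<in> SS" "\<not> Y1 \<subseteq> X" "\<not> Y2 \<subseteq> X"
    and T: "T \<in> SS" "T \<subseteq> X" "\<not> T \<subseteq> L"
  shows "(\<exists>Z\<in>hyperplanes_through Y1 - hyperplanes_through L. \<exists>W\<in>hyperplanes_through Y2. T = X \<inter> Z \<inter> W)
    \<or> (\<exists>Z\<in>hyperplanes_through (vec.span (Y1 \<union> (X \<inter> Y2))) - hyperplanes_through L. T \<subseteq> X \<inter> Z)"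
proof -
  have T': "vec.subspace T" "vec.dim T = 4" using solids T(1) by auto
  obtain Z where Z: "Z \<in> hyperplanes_through Y1" "T \<subseteq> Z"
    using cohyp Y(1) T(1) unfolding pairwise_cohyperplanar_def by blast
  have "X \<noteq> Z" using Z(1) Y(3) by (auto simp: hyperplanes_through_def)
  have Z_off: "Z \<notin> hyperplanes_through L"
  proof
    assume "Z \<in> hyperplanes_through L"
    then have "X \<inter> Z = L" using Int_hyperplanes_through_axis[OF L(1) _ X] \<open>X \<noteq> Z\<close> L(2) by simp
    then show False using T Z(2) by blast
  qed
  have XZ: "vec.subspace (X \<inter> Z)" "vec.dim (X \<inter> Z) = 5"
    using dim_Int_hyperplanes[OF X Z(1) \<open>X \<noteq> Z\<close>] by simp_all
  show ?thesis
  proof (cases "\<exists>G\<in>hyperplanes_through (X \<inter> Z). Y2 \<subseteq> G")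
    case True
    then obtain G where G: "G \<in> hyperplanes_through (X \<inter> Z)" "Y2 \<subseteq> G" by blast
    have "X \<noteq> G" using G(2) Y(4) by blast
    then have "X \<inter> G = X \<inter> Z"
      using Int_hyperplanes_eq[OF X G(1) _ XZ(1)] XZ(2) G(1) by (auto simp: hyperplanes_through_def)
    then have "X \<inter> Y2 \<subseteq> Z" using G(2) by blast
    then have "vec.span (Y1 \<union> (X \<inter> Y2)) \<subseteq> Z"
      using Z(1) by (intro vec.span_minimal) (auto simp: hyperplanes_through_def)
    then have "Z \<in> hyperplanes_through (vec.span (Y1 \<union> (X \<inter> Y2))) - hyperplanes_through L"
      using Z(1) Z_off by (auto simp: hyperplanes_through_def)
    then show ?thesis using T(2) Z(2) by blast
  next
    case False
    obtain W where W: "W \<in> hyperplanes_through Y2" "T \<subseteq> W"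
      using cohyp Y(2) T(1) unfolding pairwise_cohyperplanar_def by blast
    have "\<not> X \<inter> Z \<subseteq> W"
      using False W(1) by (auto simp: hyperplanes_through_def)
    then have "T = X \<inter> Z \<inter> W"
      using subspace_eq_Int_hyperplane[OF XZ(1) W(1)] T' XZ(2) T(2) Z(2) W(2) by simp
    then show ?thesis using Z(1) Z_off W(1) by blast
  qed
qed

lemma card_cohyperplanar_solids_off_axis:
  fixes SS :: "('a::{field,finite} ^ 7) set set"
  assumes solids: "\<forall>T\<in>SS. vec.subspace T \<and> vec.dim T = 4" and cohyp: "pairwise_cohyperplanar SS"
    and L: "vec.subspace L" "vec.dim L = 5" and axis: "\<forall>T\<in>SS. \<exists>G\<in>hyperplanes_through L. T \<subseteq> G"
    and X: "X \<in> hyperplanes_through L"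
    and Y: "Y1 \<in> SS" "Y2 \<in> SS" "\<not> Y1 \<subseteq> X" "\<not> Y2 \<subseteq> X" "\<not> X \<inter> Y2 \<subseteq> Y1"
  shows "card {T\<in>SS. T \<subseteq> X \<and> \<not> T \<subseteq> L}
    \<le> (CARD('a)^2 + CARD('a)) * (CARD('a)^2 + CARD('a) + 1)
      + CARD('a) * (CARD('a)^4 + CARD('a)^3 + CARD('a)^2 + CARD('a) + 1)"
proof -
  let ?f = "CARD('a)^4 + CARD('a)^3 + CARD('a)^2 + CARD('a) + 1"
  let ?solids_in = "\<lambda>L. {T. vec.subspace T \<and> vec.dim T = 4 \<and> T \<subseteq> L}"
  define Q where "Q = vec.span (Y1 \<union> (X \<inter> Y2))"
  let ?Zs = "hyperplanes_through Y1 - hyperplanes_through L"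
  let ?Zs' = "hyperplanes_through Q - hyperplanes_through L"
  have Y1': "vec.subspace Y1" "vec.dim Y1 = 4" using solids Y(1) by auto
  have Y2': "vec.subspace Y2" "vec.dim Y2 = 4" using solids Y(2) by auto
  obtain G1 where G1: "G1 \<in> hyperplanes_through L" "Y1 \<subseteq> G1" using axis Y(1) by blast
  obtain G2 where G2: "G2 \<in> hyperplanes_through L" "Y2 \<subseteq> G2" using axis Y(2) by blast
  have "X \<inter> Y2 \<subseteq> L" using Int_hyperplane_subset_axis[OF L(1) _ X G2 Y(4)] L(2) by simp
  then have "Q \<subseteq> G1"
    unfolding Q_def using G1 by (intro vec.span_minimal) (auto simp: hyperplanes_through_def)
  then have G1_Q: "G1 \<in> hyperplanes_through Q" using G1(1) by (auto simp: hyperplanes_through_def)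
  have G1_Y1: "G1 \<in> hyperplanes_through Y1" using G1 by (auto simp: hyperplanes_through_def)
  have "vec.dim Y1 < vec.dim Q" unfolding Q_def using dim_less_dim_Un[OF Y1'(1)] Y(5) by simp
  then have card_Zs': "card ?Zs' \<le> CARD('a)"
    using card_hyperplanes_through_Diff_le[OF G1_Q G1(1)] card_hyperplanes_through_dim_ge5[of Q] Y1'(2)
    by simp
  have "{T\<in>SS. T \<subseteq> X \<and> \<not> T \<subseteq> L}
      \<subseteq> (\<lambda>(Z, W). X \<inter> Z \<inter> W) ` (?Zs \<times> hyperplanes_through Y2) \<union> (\<Union>Z\<in>?Zs'. ?solids_in (X \<inter> Z))"
  proof
    fix T assume "T \<in> {T\<in>SS. T \<subseteq> X \<and> \<not> T \<subseteq> L}"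
    then have T: "T \<in> SS" "T \<subseteq> X" "\<not> T \<subseteq> L" "vec.subspace T" "vec.dim T = 4" using solids by auto
    from cohyperplanar_solid_off_axis_cases[OF solids cohyp L X Y(1-4) T(1-3)]
    show "T \<in> (\<lambda>(Z, W). X \<inter> Z \<inter> W) ` (?Zs \<times> hyperplanes_through Y2) \<union> (\<Union>Z\<in>?Zs'. ?solids_in (X \<inter> Z))"
      unfolding Q_def[symmetric] using T(4,5) by (auto intro: rev_image_eqI)
  qed
  then have "card {T\<in>SS. T \<subseteq> X \<and> \<not> T \<subseteq> L}
      \<le> card ((\<lambda>(Z, W). X \<inter> Z \<inter> W) ` (?Zs \<times> hyperplanes_through Y2)) + card (\<Union>Z\<in>?Zs'. ?solids_in (X \<inter> Z))"
    by (rule card_le_if_subset_Un[rotated]) simp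
  also have "card ((\<lambda>(Z, W). X \<inter> Z \<inter> W) ` (?Zs \<times> hyperplanes_through Y2))
      \<le> card ?Zs * card (hyperplanes_through Y2)"
    using card_image_le[of "?Zs \<times> hyperplanes_through Y2"] by (simp add: card_cartesian_product)
  also have "\<dots> \<le> (CARD('a)^2 + CARD('a)) * (CARD('a)^2 + CARD('a) + 1)"
    using card_hyperplanes_through_Diff_le[OF G1_Y1 G1(1)] card_hyperplanes_through_solid[OF Y1']
      card_hyperplanes_through_solid[OF Y2'] by (intro mult_le_mono) simp_all
  also have "card (\<Union>Z\<in>?Zs'. ?solids_in (X \<inter> Z)) \<le> card ?Zs' * ?f"
  proof (rule card_UN_le_card_mult)
    fix Z assume Z: "Z \<in> ?Zs'"
    then have "Y1 \<subseteq> Z" using vec.span_superset[of "Y1 \<union> (X \<inter> Y2)"]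
      unfolding Q_def hyperplanes_through_def by blast
    then have "X \<noteq> Z" using Y(3) by blast
    then show "card (?solids_in (X \<inter> Z)) \<le> ?f"
      using dim_Int_hyperplanes[OF X, of Z Q] Z card_solids_in_5space[of "X \<inter> Z"] by simp
  qed simp
  also have "\<dots> \<le> CARD('a) * ?f" using card_Zs' by (rule mult_right_mono) simp
  finally show ?thesis by simp
qed

lemma card_cohyperplanar_solids_with_axis:
  fixes SS :: "('a::{field,finite} ^ 7) set set"
  assumes solids: "\<forall>T\<in>SS. vec.subspace T \<and> vec.dim T = 4" and cohyp: "pairwise_cohyperplanar SS"
    and L: "vec.subspace L" "vec.dim L = 5" and axis: "\<forall>T\<in>SS. \<exists>G\<in>hyperplanes_through L. T \<subseteq> G"
    and off_axis: "\<forall>X\<in>hyperplanes_through L. \<exists>Y1\<in>SS. \<exists>Y2\<in>SS. \<not> Y1 \<subseteq> X \<and> \<not> Y2 \<subseteq> X \<and> \<not> X \<inter> Y2 \<subseteq> Y1"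
  shows "card SS \<le> (CARD('a)^4 + CARD('a)^3 + CARD('a)^2 + CARD('a) + 1)
     + (CARD('a) + 1) * ((CARD('a)^2 + CARD('a)) * (CARD('a)^2 + CARD('a) + 1)
        + CARD('a) * (CARD('a)^4 + CARD('a)^3 + CARD('a)^2 + CARD('a) + 1))"
proof -
  let ?per_hyperplane = "(CARD('a)^2 + CARD('a)) * (CARD('a)^2 + CARD('a) + 1)
        + CARD('a) * (CARD('a)^4 + CARD('a)^3 + CARD('a)^2 + CARD('a) + 1)"
  let ?in_axis = "{T. vec.subspace T \<and> vec.dim T = 4 \<and> T \<subseteq> L}"
  have "SS \<subseteq> ?in_axis \<union> (\<Union>X\<in>hyperplanes_through L. {T\<in>SS. T \<subseteq> X \<and> \<not> T \<subseteq> L})"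
  proof
    fix T assume T: "T \<in> SS"
    obtain X where X: "X \<in> hyperplanes_through L" "T \<subseteq> X" using axis T by blast
    show "T \<in> ?in_axis \<union> (\<Union>X\<in>hyperplanes_through L. {T\<in>SS. T \<subseteq> X \<and> \<not> T \<subseteq> L})"
    proof (cases "T \<subseteq> L")
      case True
      then show ?thesis using T solids by simp
    next
      case False
      then have "T \<in> {T\<in>SS. T \<subseteq> X \<and> \<not> T \<subseteq> L}" using T X(2) by simp
      then show ?thesis using X(1) by (intro UnI2 UN_I)
    qed
  qed
  then have "card SS \<le> card ?in_axis + card (\<Union>X\<in>hyperplanes_through L. {T\<in>SS. T \<subseteq> X \<and> \<not> T \<subseteq> L})"
    by (rule card_le_if_subset_Un[rotated]) simp
  also have "card (\<Union>X\<in>hyperplanes_through L. {T\<in>SS. T \<subseteq> X \<and> \<not> T \<subseteq> L})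
      \<le> card (hyperplanes_through L) * ?per_hyperplane"
  proof (rule card_UN_le_card_mult)
    fix X assume X: "X \<in> hyperplanes_through L"
    obtain Y1 Y2 where "Y1 \<in> SS" "Y2 \<in> SS" "\<not> Y1 \<subseteq> X" "\<not> Y2 \<subseteq> X" "\<not> X \<inter> Y2 \<subseteq> Y1"
      using off_axis X by meson
    then show "card {T\<in>SS. T \<subseteq> X \<and> \<not> T \<subseteq> L} \<le> ?per_hyperplane"
      by (rule card_cohyperplanar_solids_off_axis[OF solids cohyp L axis X])
  qed simp
  also have "\<dots> \<le> (CARD('a) + 1) * ?per_hyperplane"
    using card_hyperplanes_through_5space[OF L] by (rule mult_right_mono) simp
  finally show ?thesis using card_solids_in_5space[OF L] by linarith
qed

lemma solids_meeting_line_ge: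
  fixes q :: nat
  assumes "2 \<le> q"
  shows "(q^2 + q + 1) ^ 3 \<le> solids_meeting_line q"
    and "(q^2 + q + 1) * (q^4 + q^3 + q^2 + q + 1) + (q^3 + q^2 + q + 1) \<le> solids_meeting_line q"
    and "(q^4 + q^3 + q^2 + q + 1) + (q + 1) * ((q^2 + q) * (q^2 + q + 1) + q * (q^4 + q^3 + q^2 + q + 1))
      \<le> solids_meeting_line q"
proof -
  have double: "2 * q^k \<le> q^Suc k" for k using assms by simp
  have "q^6 + 3*q^5 + 6*q^4 + 7*q^3 + 6*q^2 + 3*q + 1 \<le> solids_meeting_line q"
    using double[of 6] double[of 5] double[of 4] double[of 3] double[of 2] double[of 1] assms
    by (simp add: solids_meeting_line_def eval_nat_numeral)
  moreover have "(q^2 + q + 1) ^ 3 = q^6 + 3*q^5 + 6*q^4 + 7*q^3 + 6*q^2 + 3*q + 1"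
    by (simp add: eval_nat_numeral algebra_simps)
  moreover have "(q^4 + q^3 + q^2 + q + 1) + (q + 1) * ((q^2 + q) * (q^2 + q + 1) + q * (q^4 + q^3 + q^2 + q + 1))
      = q^6 + 3*q^5 + 6*q^4 + 7*q^3 + 6*q^2 + 3*q + 1"
    by (simp add: eval_nat_numeral algebra_simps)
  moreover have "(q^2 + q + 1) * (q^4 + q^3 + q^2 + q + 1) + (q^3 + q^2 + q + 1)
      = q^6 + 2*q^5 + 3*q^4 + 4*q^3 + 4*q^2 + 3*q + 2"
    by (simp add: eval_nat_numeral algebra_simps)
  moreover have "1 \<le> q^2" using assms by simp
  ultimately show "(q^2 + q + 1) ^ 3 \<le> solids_meeting_line q"
    and "(q^2 + q + 1) * (q^4 + q^3 + q^2 + q + 1) + (q^3 + q^2 + q + 1) \<le> solids_meeting_line q"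
    and "(q^4 + q^3 + q^2 + q + 1) + (q + 1) * ((q^2 + q) * (q^2 + q + 1) + q * (q^4 + q^3 + q^2 + q + 1))
      \<le> solids_meeting_line q"
    by linarith+
qed

lemma cohyperplanar_solids_in_hyperplane:
  fixes SS :: "('a::{field,finite} ^ 7) set set"
  assumes solids: "\<forall>T\<in>SS. vec.subspace T \<and> vec.dim T = 4" and cohyp: "pairwise_cohyperplanar SS"
    and big: "solids_meeting_line CARD('a) < card SS"
  shows "hyperplanes_through (\<Union>SS) \<noteq> {}"
proof
  assume none: "hyperplanes_through (\<Union>SS) = {}"
  have not_in_hyperplane: "\<forall>H\<in>hyperplanes_through {}. \<exists>T\<in>SS. \<not> T \<subseteq> H"
  proof
    fix H :: "('a ^ 7) set" assume "H \<in> hyperplanes_through {}"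
    then have "\<not> \<Union>SS \<subseteq> H" using none by (auto simp: hyperplanes_through_def)
    then show "\<exists>T\<in>SS. \<not> T \<subseteq> H" by blast
  qed
  have q: "2 \<le> CARD('a)" by (rule card_field_ge2)
  have "SS \<noteq> {}" using big by auto
  then obtain A where A: "A \<in> SS" by blast
  show False
  proof (cases "\<exists>L. vec.subspace L \<and> vec.dim L = 5 \<and> (\<forall>T\<in>SS. \<exists>G\<in>hyperplanes_through L. T \<subseteq> G)")
    case False
    then have "\<forall>L. vec.subspace L \<and> vec.dim L = 5 \<longrightarrow> (\<exists>T\<in>SS. \<forall>G\<in>hyperplanes_through L. \<not> T \<subseteq> G)"
      by simp
    from card_cohyperplanar_solids_without_axis[OF solids cohyp not_in_hyperplane this A]
    show False using solids_meeting_line_ge(1)[OF q] big by linarith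
  next
    case True
    then obtain L where L: "vec.subspace L" "vec.dim L = 5"
      and axis: "\<forall>T\<in>SS. \<exists>G\<in>hyperplanes_through L. T \<subseteq> G" by blast
    have all_hyperplanes: "X \<in> hyperplanes_through {}" if "X \<in> hyperplanes_through L" for X
      using that hyperplanes_through_mono[of "{}" L] by blast
    show False
    proof (cases "\<exists>X\<in>hyperplanes_through L. \<exists>Y0\<in>SS. \<not> Y0 \<subseteq> X \<and> (\<forall>Y\<in>SS. \<not> Y \<subseteq> X \<longrightarrow> X \<inter> Y0 \<subseteq> Y)")
      case True
      then obtain X Y0 where X: "X \<in> hyperplanes_through L" and Y0: "Y0 \<in> SS" "\<not> Y0 \<subseteq> X"
        and through: "\<forall>Y\<in>SS. \<not> Y \<subseteq> X \<longrightarrow> X \<inter> Y0 \<subseteq> Y" by blast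
      from card_cohyperplanar_solids_outside_through_plane[OF solids cohyp all_hyperplanes[OF X] Y0 through]
      show False using solids_meeting_line_ge(2)[OF q] big by linarith
    next
      case False
      have "\<forall>X\<in>hyperplanes_through L. \<exists>Y1\<in>SS. \<exists>Y2\<in>SS. \<not> Y1 \<subseteq> X \<and> \<not> Y2 \<subseteq> X \<and> \<not> X \<inter> Y2 \<subseteq> Y1"
      proof
        fix X assume X: "X \<in> hyperplanes_through L"
        obtain Y2 where Y2: "Y2 \<in> SS" "\<not> Y2 \<subseteq> X"
          using not_in_hyperplane all_hyperplanes[OF X] by blast
        have "\<not> (\<forall>Y\<in>SS. \<not> Y \<subseteq> X \<longrightarrow> X \<inter> Y2 \<subseteq> Y)"
          using False X Y2 by blast
        then obtain Y1 where "Y1 \<in> SS" "\<not> Y1 \<subseteq> X" "\<not> X \<inter> Y2 \<subseteq> Y1"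
          by blast
        then show "\<exists>Y1\<in>SS. \<exists>Y2\<in>SS. \<not> Y1 \<subseteq> X \<and> \<not> Y2 \<subseteq> X \<and> \<not> X \<inter> Y2 \<subseteq> Y1"
          using Y2 by blast
      qed
      from card_cohyperplanar_solids_with_axis[OF solids cohyp L axis this]
      show False using solids_meeting_line_ge(3)[OF q] big by linarith
    qed
  qed
qed

section \<open>Saturated solids and flags\<close>

lemma flag_of_independent:
  assumes "flag_independent C" "(E, S) \<in> C"
  shows "vec.subspace E" "vec.dim E = 3" "vec.subspace S" "vec.dim S = 4" "E \<subseteq> S"
proof -
  have "flag23 (E, S)" using assms unfolding flag_independent_def by blast
  then show "vec.subspace E" "vec.dim E = 3" "vec.subspace S" "vec.dim S = 4" "E \<subseteq> S"
    unfolding flag23_def proj_subspace_def by simp_all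
qed

lemma saturated_solid_meets_flag:
  fixes C :: "(('a::{field,finite} ^ 'n) set \<times> ('a ^ 'n) set) set"
  assumes ind: "flag_independent C" and F: "(E, S) \<in> C"
    and T: "solid T" "saturated C T" and ET: "E \<inter> T = {0}"
  shows "2 \<le> vec.dim (S \<inter> T)"
proof (rule ccontr)
  assume "\<not> 2 \<le> vec.dim (S \<inter> T)"
  have E: "vec.subspace E" "vec.dim E = 3" and S: "vec.subspace S"
    using flag_of_independent[OF ind F] by simp_all
  have T': "vec.subspace T" "vec.dim T = 4" using T(1) by (simp_all add: proj_subspace_def)
  obtain E' where E': "vec.subspace E'" "E' \<subseteq> T" "vec.dim E' = 3" "E' \<inter> (S \<inter> T) = {0}"
    using exists_subspace_disjoint[OF vec.subspace_inter[OF S T'(1)] T'(1), of 3]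
      \<open>\<not> 2 \<le> vec.dim (S \<inter> T)\<close> T'(2) by auto
  have "(E', T) \<in> C" using T(2) E' unfolding saturated_def proj_subspace_def by simp
  moreover have "(E, S) \<noteq> (E', T)"
  proof
    assume "(E, S) = (E', T)"
    then have "E = {0}" using ET E'(2) by auto
    then show False using E(2) by simp
  qed
  moreover have "E' \<inter> S = {0}" using E'(2,4) by blast
  ultimately have "flag_adj (E, S) (E', T)" using ET unfolding flag_adj_def proj_disjoint_def by simp
  then show False using ind F \<open>(E', T) \<in> C\<close> unfolding flag_independent_def by blast
qed

lemma saturated_solids_meet_in_line:
  fixes C :: "(('a::{field,finite} ^ 'n) set \<times> ('a ^ 'n) set) set"
  assumes ind: "flag_independent C"
    and T: "solid T" "saturated C T" and T': "solid T'" "saturated C T'"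
  shows "2 \<le> vec.dim (T \<inter> T')"
proof (rule ccontr)
  assume "\<not> 2 \<le> vec.dim (T \<inter> T')"
  have sT: "vec.subspace T" "vec.dim T = 4" using T(1) by (simp_all add: proj_subspace_def)
  have sT': "vec.subspace T'" using T'(1) by (simp add: proj_subspace_def)
  obtain E where E: "vec.subspace E" "E \<subseteq> T" "vec.dim E = 3" "E \<inter> (T \<inter> T') = {0}"
    using exists_subspace_disjoint[OF vec.subspace_inter[OF sT(1) sT'] sT(1), of 3]
      \<open>\<not> 2 \<le> vec.dim (T \<inter> T')\<close> sT(2) by auto
  have "(E, T) \<in> C" using T(2) E unfolding saturated_def proj_subspace_def by simp
  moreover have "E \<inter> T' = {0}" using E(2,4) by blast
  ultimately show False
    using saturated_solid_meets_flag[OF ind _ T'] \<open>\<not> 2 \<le> vec.dim (T \<inter> T')\<close> by blast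
qed

lemma saturated_solids_pairwise_cohyperplanar:
  fixes C :: "(('a::{field,finite} ^ 7) set \<times> ('a ^ 7) set) set"
  assumes "flag_independent C"
  shows "pairwise_cohyperplanar {S. solid S \<and> saturated C S}"
  unfolding pairwise_cohyperplanar_def
proof (intro ballI)
  fix T T' assume "T \<in> {S. solid S \<and> saturated C S}" "T' \<in> {S. solid S \<and> saturated C S}"
  then show "\<exists>G\<in>hyperplanes_through T. T' \<subseteq> G"
    using saturated_solids_meet_in_line[OF assms] solids_meeting_in_line_cohyperplanar[of T T']
    by (simp add: proj_subspace_def)
qed

lemma flag_plane_in_hyperplane:
  fixes C :: "(('a::{field,finite} ^ 7) set \<times> ('a ^ 7) set) set"
  assumes ind: "flag_independent C"
    and H: "H \<in> hyperplanes_through (\<Union>{S. solid S \<and> saturated C S})"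
    and big: "solids_meeting_line CARD('a) < card {S. solid S \<and> saturated C S}"
    and F: "(E, S) \<in> C"
  shows "E \<subseteq> H"
proof (rule ccontr)
  assume "\<not> E \<subseteq> H"
  have E: "vec.subspace E" "vec.dim E = 3" and S: "vec.subspace S" "vec.dim S = 4" and "E \<subseteq> S"
    using flag_of_independent[OF ind F] by simp_all
  have H': "vec.subspace H" "vec.dim H = CARD(7) - 1" using H by (auto simp: hyperplanes_through_def)
  then have H6: "vec.dim H = 6" by simp
  let ?l = "H \<inter> E"
  have "vec.dim ?l + 1 = vec.dim E" using dim_Int_hyperplane[OF H' E(1) \<open>\<not> E \<subseteq> H\<close>] .
  then have l: "vec.subspace ?l" "vec.dim ?l = 2" "?l \<subseteq> H"
    using vec.subspace_inter[OF H'(1) E(1)] E(2) by auto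
  have "\<not> S \<subseteq> H" using \<open>\<not> E \<subseteq> H\<close> \<open>E \<subseteq> S\<close> by blast
  then have "vec.dim (H \<inter> S) + 1 = vec.dim S" using dim_Int_hyperplane[OF H' S(1)] by simp
  then have HS: "vec.subspace (H \<inter> S)" "vec.dim (H \<inter> S) = 3" "?l \<subseteq> H \<inter> S"
    using vec.subspace_inter[OF H'(1) S(1)] S(2) \<open>E \<subseteq> S\<close> by auto
  let ?meeting = "{T. vec.subspace T \<and> vec.dim T = 4 \<and> T \<subseteq> H \<and> T \<inter> ?l \<noteq> {0}}"
  have "\<not> {S. solid S \<and> saturated C S} \<subseteq> ?meeting"
  proof
    assume "{S. solid S \<and> saturated C S} \<subseteq> ?meeting"
    then have "card {S. solid S \<and> saturated C S} \<le> card ?meeting" by (rule card_mono[rotated]) simp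
    then show False using card_solids_meeting_line[OF H'(1) H6 l] big by linarith
  qed
  then obtain T where T: "solid T" "saturated C T" and "T \<notin> ?meeting" by blast
  have T': "vec.subspace T" "vec.dim T = 4" using T(1) by (simp_all add: proj_subspace_def)
  have "\<Union>{S. solid S \<and> saturated C S} \<subseteq> H" using H by (simp add: hyperplanes_through_def)
  then have "T \<subseteq> H" using T by blast
  then have Tl: "T \<inter> ?l = {0}" using \<open>T \<notin> ?meeting\<close> T' by simp
  moreover have "E \<inter> T = T \<inter> ?l" using \<open>T \<subseteq> H\<close> by blast
  ultimately have "E \<inter> T = {0}" by simp
  then have "2 \<le> vec.dim (S \<inter> T)" by (rule saturated_solid_meets_flag[OF ind F T])
  moreover have "S \<inter> T \<subseteq> H \<inter> S" using \<open>T \<subseteq> H\<close> by blast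
  ultimately have "\<exists>x\<in>(S \<inter> T) \<inter> ?l. x \<noteq> 0"
    using exists_nonzero_in_Int_if_dim_gt[OF vec.subspace_inter[OF S(1) T'(1)] l(1) HS(1) _ HS(3)] l(2) HS(2) by simp
  then show False using Tl by blast
qed

lemma flag_plane_eq_Int_hyperplane:
  assumes ind: "flag_independent C" and F: "(E, S) \<in> C"
    and H: "H \<in> hyperplanes_through E" "\<not> S \<subseteq> H"
  shows "E = H \<inter> S"
proof -
  have E: "vec.subspace E" "vec.dim E = 3" and S: "vec.subspace S" "vec.dim S = 4" and "E \<subseteq> S"
    using flag_of_independent[OF ind F] by simp_all
  show ?thesis
    using subspace_eq_Int_hyperplane[OF S(1) H] E S(2) \<open>E \<subseteq> S\<close> H(1)
    by (auto simp: hyperplanes_through_def Int_commute)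
qed

lemma flag_planes_meet_if_Int_hyperplane:
  assumes ind: "flag_independent C" and F: "(E, S) \<in> C" "(E', S') \<in> C"
    and E: "E = H \<inter> S" "E' = H \<inter> S'"
  shows "\<not> proj_disjoint E E'"
proof
  assume "proj_disjoint E E'"
  then have disjoint: "E \<inter> E' = {0}" unfolding proj_disjoint_def .
  have "E \<inter> S' = E \<inter> E'" "E' \<inter> S = E \<inter> E'" using E by blast+
  moreover have "(E, S) \<noteq> (E', S')"
  proof
    assume "(E, S) = (E', S')"
    then have "E = {0}" using disjoint by simp
    then show False using flag_of_independent(2)[OF ind F(1)] by simp
  qed
  ultimately have "flag_adj (E, S) (E', S')" using disjoint unfolding flag_adj_def proj_disjoint_def by simp
  then show False using ind F unfolding flag_independent_def by blast
qed

lemma planes_off_hyperplane_independent: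
  assumes ind: "flag_independent C" and H: "H \<in> hyperplanes_through {}"
    and planes_in: "\<And>E S. (E, S) \<in> C \<Longrightarrow> E \<subseteq> H"
  shows "plane_independent_in H {E. \<exists>S. (E, S) \<in> C \<and> \<not> S \<subseteq> H}"
  unfolding plane_independent_in_def
proof (intro conjI ballI)
  fix E assume "E \<in> {E. \<exists>S. (E, S) \<in> C \<and> \<not> S \<subseteq> H}"
  then obtain S where F: "(E, S) \<in> C" by blast
  show "plane E" using flag_of_independent[OF ind F] by (simp add: proj_subspace_def)
  show "E \<subseteq> H" using planes_in[OF F] .
next
  fix E E' assume "E \<in> {E. \<exists>S. (E, S) \<in> C \<and> \<not> S \<subseteq> H}" "E' \<in> {E. \<exists>S. (E, S) \<in> C \<and> \<not> S \<subseteq> H}"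
  then obtain S S' where F: "(E, S) \<in> C" "\<not> S \<subseteq> H" and F': "(E', S') \<in> C" "\<not> S' \<subseteq> H" by blast
  have "E = H \<inter> S"
    using flag_plane_eq_Int_hyperplane[OF ind F(1) _ F(2)] H planes_in[OF F(1)]
    by (auto simp: hyperplanes_through_def)
  moreover have "E' = H \<inter> S'"
    using flag_plane_eq_Int_hyperplane[OF ind F'(1) _ F'(2)] H planes_in[OF F'(1)]
    by (auto simp: hyperplanes_through_def)
  ultimately show "\<not> proj_disjoint E E'" by (rule flag_planes_meet_if_Int_hyperplane[OF ind F(1) F'(1)])
qed

lemma plane_meets_solid_in_6space:
  fixes E S S' H :: "('a::field ^ 'n) set"
  assumes "vec.subspace E" "vec.dim E = 3" "vec.subspace S" "vec.dim S = 4" "E \<subseteq> S"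
    and "vec.subspace S'" "vec.dim S' = 4" and "vec.subspace H" "vec.dim H = 6" "S \<subseteq> H" "S' \<subseteq> H"
  shows "\<exists>x\<in>E \<inter> S'. x \<noteq> 0"
proof -
  have "2 \<le> vec.dim (S \<inter> S')" using dim_Int_ge[of S S' H] assms by simp
  then obtain x where "x \<in> E \<inter> (S \<inter> S')" "x \<noteq> 0"
    using exists_nonzero_in_Int_if_dim_gt[of E "S \<inter> S'" S] vec.subspace_inter[of S S'] assms by auto
  then show ?thesis by blast
qed

lemma Lambda_independent:
  fixes H :: "('a::field ^ 'n) set"
  assumes H: "vec.subspace H" "vec.dim H = 6" and \<E>: "plane_independent_in H \<E>"
  shows "flag_independent (Lambda H \<E>)"
  unfolding flag_independent_def
proof (intro conjI ballI)
  fix F assume "F \<in> Lambda H \<E>" then show "flag23 F" unfolding Lambda_def by simp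
next
  fix F G assume F: "F \<in> Lambda H \<E>" and G: "G \<in> Lambda H \<E>"
  obtain E S E' S' where FG: "F = (E, S)" "G = (E', S')" by (cases F, cases G)
  have "flag23 (E, S)" "S \<subseteq> H \<or> E \<in> \<E>" "flag23 (E', S')" "S' \<subseteq> H \<or> E' \<in> \<E>"
    using F G FG unfolding Lambda_def by auto
  then have E: "vec.subspace E" "vec.dim E = 3" "vec.subspace S" "vec.dim S = 4" "E \<subseteq> S"
    and E': "vec.subspace E'" "vec.dim E' = 3" "vec.subspace S'" "vec.dim S' = 4" "E' \<subseteq> S'"
    and cases: "S \<subseteq> H \<or> E \<in> \<E>" "S' \<subseteq> H \<or> E' \<in> \<E>"
    unfolding flag23_def proj_subspace_def by auto
  have in_H: "E \<in> \<E> \<Longrightarrow> E \<subseteq> H" "E' \<in> \<E> \<Longrightarrow> E' \<subseteq> H"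
    using \<E> unfolding plane_independent_in_def by auto
  have "(\<exists>x\<in>E \<inter> S'. x \<noteq> 0) \<or> (\<exists>x\<in>E' \<inter> S. x \<noteq> 0)"
  proof (cases "S \<subseteq> H"; cases "S' \<subseteq> H")
    assume "S \<subseteq> H" "S' \<subseteq> H"
    then show ?thesis using plane_meets_solid_in_6space[OF E E'(3,4) H] by blast
  next
    assume "S \<subseteq> H" "\<not> S' \<subseteq> H"
    then show ?thesis
      using exists_nonzero_in_Int_if_dim_gt[OF E'(1) E(3) H(1)] in_H(2) cases(2) E(4) E'(2) H(2) by simp
  next
    assume "\<not> S \<subseteq> H" "S' \<subseteq> H"
    then show ?thesis
      using exists_nonzero_in_Int_if_dim_gt[OF E(1) E'(3) H(1)] in_H(1) cases(1) E(2) E'(4) H(2) by simp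
  next
    assume "\<not> S \<subseteq> H" "\<not> S' \<subseteq> H"
    then have "\<not> proj_disjoint E E'" using \<E> cases unfolding plane_independent_in_def by blast
    then obtain x where "x \<in> E \<inter> E'" "x \<noteq> 0"
      using vec.subspace_0[OF E(1)] vec.subspace_0[OF E'(1)] unfolding proj_disjoint_def by blast
    then show ?thesis using E'(5) by blast
  qed
  then show "\<not> flag_adj F G" unfolding flag_adj_def proj_disjoint_def FG by auto
qed

lemma subset_Lambda:
  assumes "flag_independent C" "{E. \<exists>S. (E, S) \<in> C \<and> \<not> S \<subseteq> H} \<subseteq> \<E>"
  shows "C \<subseteq> Lambda H \<E>"
proof
  fix F assume "F \<in> C"
  then obtain E S where F: "F = (E, S)" "(E, S) \<in> C" by (cases F) auto
  then have "S \<subseteq> H \<or> E \<in> \<E>" using assms(2) by blast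
  then show "F \<in> Lambda H \<E>" using F assms(1) unfolding Lambda_def flag_independent_def by auto
qed

lemma plane_independent_extends_to_max:
  fixes H :: "('a::{field,finite} ^ 'n) set"
  assumes "plane_independent_in H \<E>\<^sub>0"
  obtains \<E> where "\<E>\<^sub>0 \<subseteq> \<E>" "plane_max_independent_in H \<E>"
proof -
  let ?P = "{\<F>. plane_independent_in H \<F> \<and> \<E>\<^sub>0 \<subseteq> \<F>}"
  have fin: "finite (card ` ?P)" by simp
  have ne: "card ` ?P \<noteq> {}" using assms by blast
  obtain \<E> where \<E>: "\<E> \<in> ?P" "card \<E> = Max (card ` ?P)" using Max_in[OF fin ne] by auto
  have "plane_max_independent_in H \<E>"
    unfolding plane_max_independent_in_def
  proof (intro conjI allI impI)
    show "plane_independent_in H \<E>" using \<E> by simp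
    fix \<F> assume \<F>: "plane_independent_in H \<F> \<and> \<E> \<subseteq> \<F>"
    then have "card \<F> \<le> card \<E>" using \<E> Max_ge[OF fin] by auto
    then show "\<F> = \<E>" using \<F> card_subset_eq[of \<F> \<E>] by (metis card_seteq finite)
  qed
  then show thesis using that \<E> by auto
qed

theorem lemma6p4:
  fixes C :: "(('a::{field,finite} ^ 7) set \<times> ('a ^ 7) set) set"
  defines "q \<equiv> CARD('a)"
  assumes "flag_max_independent C"
    and "card {S :: ('a ^ 7) set. solid S \<and> saturated C S}
           > q^7 + 2*q^6 + 2*q^5 + 3*q^4 + 2*q^3 + 2*q^2 + q + 1"
  shows "\<exists>H \<E>. proj_subspace 5 H \<and> plane_max_independent_in H \<E> \<and> C = Lambda H \<E>"
proof -
  let ?saturated = "{S :: ('a ^ 7) set. solid S \<and> saturated C S}"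
  have ind: "flag_independent C" and maximal: "\<And>D. flag_independent D \<Longrightarrow> C \<subseteq> D \<Longrightarrow> D = C"
    using assms(2) unfolding flag_max_independent_def by auto
  have big: "solids_meeting_line CARD('a) < card ?saturated"
    using assms(3) unfolding q_def solids_meeting_line_def .
  obtain H where H: "H \<in> hyperplanes_through (\<Union>?saturated)"
    using cohyperplanar_solids_in_hyperplane[OF _ saturated_solids_pairwise_cohyperplanar[OF ind] big]
    by (auto simp: proj_subspace_def)
  have H': "vec.subspace H" "vec.dim H = 6" "H \<in> hyperplanes_through {}"
    using H by (auto simp: hyperplanes_through_def)
  have planes_in: "E \<subseteq> H" if "(E, S) \<in> C" for E S
    using flag_plane_in_hyperplane[OF ind H big that] .
  obtain \<E> where \<E>: "{E. \<exists>S. (E, S) \<in> C \<and> \<not> S \<subseteq> H} \<subseteq> \<E>" "plane_max_independent_in H \<E>"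
    using plane_independent_extends_to_max[OF planes_off_hyperplane_independent[OF ind H'(3) planes_in]] .
  have "C \<subseteq> Lambda H \<E>" using subset_Lambda[OF ind \<E>(1)] .
  then have "Lambda H \<E> = C"
    using maximal Lambda_independent[OF H'(1,2)] \<E>(2) unfolding plane_max_independent_in_def by blast
  moreover have "proj_subspace 5 H" using H' by (simp add: proj_subspace_def)
  ultimately show ?thesis using \<E>(2) by blast
qed

end
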